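(* Let $q\in(0,1)$, $k\ge1$, and let $R:\mathbb{R}^k\to\mathbb{R}$ be a convex differentiable regularizer such that all the minimizers below exist. Run FTRL as follows for $t=1,\dots,T$: receive $g_t\in[0,1]^k$; set $\theta_t\in\arg\min_{\theta\in\mathbb{R}^k}\sum_{s=1}^{t-1}\ell_s(\theta)+R(\theta)$; predict $\hat\tau_t=\langle\theta_t,g_t\rangle$; receive $\tau_t\in[0,1]$; define the linear loss $\ell_t(\theta)=\langle\theta,g_t\rangle\,(\mathbf{1}[\tau_t\le\hat\tau_t]-q)$ (the linearization of $\theta\mapsto p_q(\langle\theta,g_t\rangle,\tau_t)$ at $\theta_t$). Let $\theta_{T+1}\in\arg\min_\theta\sum_{s=1}^{T}\ell_s(\theta)+R(\theta)$. Then for every $i\in[k]$ with $T_i>0$, $$\left|\mathrm{Cov}(\Pi_T,G_i)-q\right|\le\frac{\|\nabla R(\theta_{T+1})\|_\infty}{T_i}.$$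
   Context: For $q\in(0,1)$ the pinball loss is $p_q(\hat\tau,\tau)=q(\tau-\hat\tau)$ if $\tau\ge\hat\tau$ and $p_q(\hat\tau,\tau)=(q-1)(\tau-\hat\tau)$ if $\tau<\hat\tau$. There are $k$ prediction-independent groups $G_1,\dots,G_k$ (functions of the history and context, with values in $[0,1]$, not depending on the current prediction), and $g_t=(g_{t,1},\dots,g_{t,k})$ with $g_{t,i}=G_i$ evaluated at round $t$; the sequences $g_t,\tau_t$ may be chosen adversarially. The group size is $T_i=\sum_{t=1}^T g_{t,i}$ and the group conditional coverage is $\mathrm{Cov}(\Pi_T,G_i)=\frac{1}{T_i}\sum_{t=1}^T\mathbf{1}[\hat\tau_t\ge\tau_t]\,g_{t,i}$. *)

theory Defs
  imports "HOL-Analysis.Analysis"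
begin

definition pinball :: "real \<Rightarrow> real \<Rightarrow> real \<Rightarrow> real" where
  "pinball q tauhat tau = (if tau \<ge> tauhat then q * (tau - tauhat) else (q - 1) * (tau - tauhat))"

definition pred :: "(nat \<Rightarrow> real^'k) \<Rightarrow> (nat \<Rightarrow> real^'k) \<Rightarrow> nat \<Rightarrow> real" where
  "pred theta g t = theta t \<bullet> g t"

definition lin_loss :: "real \<Rightarrow> (nat \<Rightarrow> real^'k) \<Rightarrow> (nat \<Rightarrow> real^'k) \<Rightarrow> (nat \<Rightarrow> real)
    \<Rightarrow> nat \<Rightarrow> real^'k \<Rightarrow> real" where
  "lin_loss q theta g tau t th =
     (th \<bullet> g t) * ((if tau t \<le> pred theta g t then 1 else 0) - q)"

definition grad :: "(real^'k \<Rightarrow> real) \<Rightarrow> real^'k \<Rightarrow> real^'k" where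
  "grad R x = (\<chi> i. frechet_derivative R (at x) (axis i 1))"

definition group_size :: "(nat \<Rightarrow> real^'k) \<Rightarrow> nat \<Rightarrow> 'k \<Rightarrow> real" where
  "group_size g T i = (\<Sum>t\<in>{1..T}. g t $ i)"

definition coverage :: "(nat \<Rightarrow> real^'k) \<Rightarrow> (nat \<Rightarrow> real^'k) \<Rightarrow> (nat \<Rightarrow> real) \<Rightarrow> nat \<Rightarrow> 'k \<Rightarrow> real" where
  "coverage theta g tau T i =
     (1 / group_size g T i) * (\<Sum>t\<in>{1..T}. (if pred theta g t \<ge> tau t then 1 else 0) * g t $ i)"

end

theory Submission
  imports Defs
begin

text \<open>The linearised losses make the objective minimised by the last iterate
  \<open>\<theta>\<^sub>T\<^sub>+\<^sub>1\<close> equal to \<open>\<langle>c, \<theta>\<rangle> + R \<theta>\<close> with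
  \<open>c = \<Sum>\<^sub>t (\<one>[\<tau>\<^sub>t \<le> \<langle>\<theta>\<^sub>t, g\<^sub>t\<rangle>] - q) g\<^sub>t\<close>, whose \<open>i\<close>-th coordinate is
  \<open>T\<^sub>i (Cov - q)\<close>. First-order optimality gives \<open>c = - \<nabla>R(\<theta>\<^sub>T\<^sub>+\<^sub>1)\<close>, so
  the coverage error is a coordinate of \<open>\<nabla>R(\<theta>\<^sub>T\<^sub>+\<^sub>1)\<close> divided by \<open>T\<^sub>i\<close>.\<close>

lemma grad_eq_uminus_if_minimises_inner_plus:
  fixes R :: "real^'k \<Rightarrow> real"
  assumes diff: "R differentiable (at x)"
    and minimal: "\<And>y. c \<bullet> x + R x \<le> c \<bullet> y + R y"
  shows "grad R x = - c"
proof -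
  let ?D = "frechet_derivative R (at x)"
  have "((\<lambda>y. c \<bullet> y + R y) has_derivative (\<lambda>h. c \<bullet> h + ?D h)) (at x)"
    using diff frechet_derivative_works by (auto intro!: derivative_eq_intros)
  then have "(\<lambda>h. c \<bullet> h + ?D h) = (\<lambda>h. 0)"
    by (rule has_derivative_local_min) (use minimal in simp)
  then have "c \<bullet> axis i 1 + ?D (axis i 1) = 0" for i
    by (simp add: fun_eq_iff)
  then show ?thesis
    by (simp add: grad_def vec_eq_iff inner_axis eq_neg_iff_add_eq_0 add.commute)
qed

definition cum_loss_grad ::
    "real \<Rightarrow> (nat \<Rightarrow> real^'k) \<Rightarrow> (nat \<Rightarrow> real^'k) \<Rightarrow> (nat \<Rightarrow> real) \<Rightarrow> nat \<Rightarrow> real^'k" where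
  "cum_loss_grad q theta g tau T =
     (\<Sum>t\<in>{1..T}. ((if tau t \<le> pred theta g t then 1 else 0) - q) *\<^sub>R g t)"

lemma sum_lin_loss_eq_inner_cum_loss_grad:
  "(\<Sum>t\<in>{1..<T+1}. lin_loss q theta g tau t th) = cum_loss_grad q theta g tau T \<bullet> th"
  unfolding cum_loss_grad_def lin_loss_def
  by (simp add: atLeastLessThanSuc_atLeastAtMost inner_sum_right inner_commute mult.commute)

lemma coverage_minus_eq_cum_loss_grad:
  assumes "group_size g T i \<noteq> 0"
  shows "coverage theta g tau T i - q = cum_loss_grad q theta g tau T $ i / group_size g T i"
proof -
  have "cum_loss_grad q theta g tau T $ i
      = (\<Sum>t\<in>{1..T}. (if pred theta g t \<ge> tau t then 1 else 0) * g t $ i) - q * group_size g T i"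
    unfolding cum_loss_grad_def group_size_def
    by (simp add: sum_component left_diff_distrib sum_subtractf sum_distrib_left)
  with assms show ?thesis
    unfolding coverage_def by (simp add: field_simps)
qed

theorem theorem8:
  fixes q :: real and R :: "real^'k \<Rightarrow> real"
    and g theta :: "nat \<Rightarrow> real^'k" and tau :: "nat \<Rightarrow> real" and T :: nat
  assumes q: "0 < q" "q < 1"
    and R_convex: "convex_on UNIV R"
    and R_diff: "\<And>x. R differentiable (at x)"
    and g_range: "\<And>t j. t \<in> {1..T} \<Longrightarrow> 0 \<le> g t $ j \<and> g t $ j \<le> 1"
    and tau_range: "\<And>t. t \<in> {1..T} \<Longrightarrow> 0 \<le> tau t \<and> tau t \<le> 1"
    and ftrl: "\<And>t th. t \<in> {1..T+1} \<Longrightarrow>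
        (\<Sum>s\<in>{1..<t}. lin_loss q theta g tau s (theta t)) + R (theta t)
          \<le> (\<Sum>s\<in>{1..<t}. lin_loss q theta g tau s th) + R th"
  shows "\<forall>i. group_size g T i > 0 \<longrightarrow>
           \<bar>coverage theta g tau T i - q\<bar> \<le> infnorm (grad R (theta (T+1))) / group_size g T i"
proof (intro allI impI)
  fix i assume pos: "group_size g T i > 0"
  let ?\<theta> = "theta (T+1)"
  have "grad R ?\<theta> = - cum_loss_grad q theta g tau T"
    using ftrl[of "T+1", unfolded sum_lin_loss_eq_inner_cum_loss_grad]
    by (intro grad_eq_uminus_if_minimises_inner_plus R_diff) simp
  then have "\<bar>coverage theta g tau T i - q\<bar> = \<bar>grad R ?\<theta> $ i\<bar> / group_size g T i"
    using pos by (simp add: coverage_minus_eq_cum_loss_grad)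
  also have "\<dots> \<le> infnorm (grad R ?\<theta>) / group_size g T i"
    using pos by (intro divide_right_mono component_le_infnorm_cart) simp
  finally show "\<bar>coverage theta g tau T i - q\<bar> \<le> infnorm (grad R ?\<theta>) / group_size g T i" .
qed

end
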